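(* In the setting of the classical risk model below, suppose Assumption A1 holds and $B_0\in\mathcal{S}$. Then for every sufficiently small $\epsilon>0$, $$\lim_{u\to\infty}\frac{\mathbb{P}\left(\sup_{n\ge1}\left\{n(p\mu^{-1}-\epsilon)-p\sum_{i=1}^n T_i\right\}\ge u\right)}{\overline{B}_0(u)}=0.$$
   Context: Risk model: $U_t=u+pt-\sum_{i=1}^{N_t}C_i$ with $u>0$, premium rate $p>0$, $C_i$ i.i.d. nonnegative claims with distribution function $B$ and $\mathbb{E}[C_1]<\infty$, independent of the simple point process $N_t$ ($N_0=0$) with arrival times $\tau_i$ and inter-arrival times $T_i=\tau_i-\tau_{i-1}$, $\tau_0=0$. For a distribution function $F$, $\overline F=1-F$. $B_0(x):=\frac{1}{\mathbb{E}[C_1]}\int_0^x\overline B(y)\,dy$. $\mathcal S$ (subexponential distributions) is the class of distribution functions $F$ on $[0,\infty)$ with $\lim_{x\to\infty}\mathbb{P}(X_1+X_2>x)/\mathbb{P}(X_1>x)=2$ for $X_1,X_2$ i.i.d. with distribution $F$. Assumption A1: (i) $(N_t/t\in\cdot)$ satisfies a large deviation principle with rate function $I$ such that $I(x)=0$ iff $x=\mu$; (ii) $I$ is increasing on $[\mu,\infty)$ and decreasing on $[0,\mu]$; (iii) $\rho:=\mu\mathbb{E}[C_1]/p<1$; (iv) there is $\theta>0$ with $\mathbb{E}[e^{\theta\sum_{i=1}^nT_i}]<\infty$ for all $n\in\mathbb{N}$. *)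

theory Defs
  imports "HOL-Probability.Probability"
begin

definition nonneg_cdf :: "(real \<Rightarrow> real) \<Rightarrow> bool" where
  "nonneg_cdf F \<longleftrightarrow> mono F \<and> (\<forall>x. continuous (at_right x) F) \<and> (\<forall>x<0. F x = 0)
     \<and> (F \<longlongrightarrow> 1) at_top"

text \<open>Subexponential distributions: for X1, X2 iid with distribution F (the Lebesgue-Stieltjes
  measure of F), P(X1 + X2 > x) / P(X1 > x) tends to 2.\<close>
definition subexponential :: "(real \<Rightarrow> real) \<Rightarrow> bool" where
  "subexponential F \<longleftrightarrow> nonneg_cdf F \<and>
     ((\<lambda>x. measure (interval_measure F \<Otimes>\<^sub>M interval_measure F) {z. fst z + snd z > x}
            / (1 - F x)) \<longlongrightarrow> 2) at_top"

definition dist_fun :: "'a measure \<Rightarrow> ('a \<Rightarrow> real) \<Rightarrow> real \<Rightarrow> real" where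
  "dist_fun M X x = measure M {\<omega> \<in> space M. X \<omega> \<le> x}"

definition integrated_tail :: "'a measure \<Rightarrow> ('a \<Rightarrow> real) \<Rightarrow> real \<Rightarrow> real" where
  "integrated_tail M X x =
     (1 / integral\<^sup>L M X) * (\<integral>y\<in>{0..x}. (1 - dist_fun M X y) \<partial>lborel)"

definition elog :: "real \<Rightarrow> ereal" where
  "elog x = (if x \<le> 0 then -\<infinity> else ereal (ln x))"

definition rate_function :: "(real \<Rightarrow> ereal) \<Rightarrow> bool" where
  "rate_function I \<longleftrightarrow> (\<forall>x. 0 \<le> I x) \<and> (\<forall>c. closed {x. I x \<le> c})"

definition LDP :: "'a measure \<Rightarrow> (real \<Rightarrow> 'a \<Rightarrow> real) \<Rightarrow> (real \<Rightarrow> ereal) \<Rightarrow> bool" where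
  "LDP M Z I \<longleftrightarrow> rate_function I \<and>
     (\<forall>F. closed F \<longrightarrow>
        Limsup at_top (\<lambda>t. ereal (1 / t) * elog (measure M {\<omega> \<in> space M. Z t \<omega> \<in> F}))
          \<le> - (INF x\<in>F. I x)) \<and>
     (\<forall>G. open G \<longrightarrow>
        - (INF x\<in>G. I x)
          \<le> Liminf at_top (\<lambda>t. ereal (1 / t) * elog (measure M {\<omega> \<in> space M. Z t \<omega> \<in> G})))"

end

theory Submission
  imports Defs
begin

text \<open>Put \<open>a = p/\<mu> - \<epsilon>\<close> and pick \<open>\<nu>\<close> strictly between \<open>\<mu>\<close> and \<open>p/a\<close>. If the walk
  \<open>n a - p S\<^sub>n\<close> reaches level \<open>u\<close>, then at some time \<open>s \<ge> u/(4a\<nu>)\<close> the first \<open>\<lceil>\<nu> s\<rceil>\<close>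
  inter-arrival times sum to at most \<open>s\<close>, i.e. \<open>N\<^sub>s/s \<ge> \<nu>\<close>. Since \<open>I\<close> is increasing and vanishes
  only at \<open>\<mu>\<close>, the LDP upper bound makes this exponentially unlikely in \<open>s\<close>, and summing over
  integer times gives \<open>P(sup \<ge> u) \<le> K e\<^sup>-\<^sup>\<beta>\<^sup>u\<close>. A subexponential distribution is long-tailed,
  \<open>(1 - F(x-1)) / (1 - F x) \<rightarrow> 1\<close>, so its tail dominates every exponential, and the ratio tends
  to \<open>0\<close>.\<close>

lemma nonneg_cdf_interval_measure:
  assumes "nonneg_cdf F"
  shows "real_distribution (interval_measure F)"
    and "measure (interval_measure F) {..<0} = 0"
    and "\<And>x. measure (interval_measure F) {..x} = F x"
    and "\<And>a b. a \<le> b \<Longrightarrow> measure (interval_measure F) {a<..b} = F b - F a"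
proof -
  have nd: "\<And>x y. x \<le> y \<Longrightarrow> F x \<le> F y" and rc: "\<And>x. continuous (at_right x) F"
    and F_neg: "\<And>x. x < 0 \<Longrightarrow> F x = 0" and F_top: "(F \<longlongrightarrow> 1) at_top"
    using assms by (auto simp: nonneg_cdf_def mono_def)
  have F_bot: "(F \<longlongrightarrow> 0) at_bot"
    by (rule tendsto_eventually) (use F_neg in \<open>auto simp: eventually_at_bot_linorder intro!: exI[of _ "-1"]\<close>)
  show "real_distribution (interval_measure F)"
    by (rule real_distribution_interval_measure[OF nd rc F_bot F_top])
  then interpret Q: real_distribution "interval_measure F" .
  show Iic: "\<And>x. measure (interval_measure F) {..x} = F x"
    by (rule measure_interval_measure_Iic[OF nd rc F_bot])
  show "\<And>a b. a \<le> b \<Longrightarrow> measure (interval_measure F) {a<..b} = F b - F a"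
    by (rule measure_interval_measure_Ioc) (auto simp: nd rc)
  have "{..<0::real} = (\<Union>n::nat. {..-1 / Suc n})"
  proof safe
    fix x :: real assume "x < 0"
    then obtain n :: nat where "1 / Suc n < -x"
      by (metis neg_0_less_iff_less nat_approx_posE)
    then show "x \<in> (\<Union>n::nat. {..-1 / Suc n})" by (auto intro!: exI[of _ n])
  qed (smt (verit) divide_neg_pos of_nat_0_less_iff zero_less_Suc)
  moreover have "(\<Union>n::nat. {..-1 / Suc n}) \<in> null_sets (interval_measure F)"
    using Iic F_neg by (intro null_sets_UN) (simp add: Q.emeasure_eq_measure null_sets_def)
  ultimately show "measure (interval_measure F) {..<0} = 0"
    by (simp add: Q.emeasure_eq_measure null_sets_def)
qed

lemma convolution_tail_lower_bound:
  assumes F: "nonneg_cdf F" and x: "1 \<le> x"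
  shows "(1 - F x) * F 1 + (1 - F (x - 1)) * (F x - F 1) + (1 - F x)
    \<le> measure (interval_measure F \<Otimes>\<^sub>M interval_measure F) {z. fst z + snd z > x}"
proof -
  let ?Q = "interval_measure F"
  let ?P = "?Q \<Otimes>\<^sub>M ?Q"
  note Q_facts = nonneg_cdf_interval_measure[OF F]
  interpret Q: real_distribution ?Q by (rule Q_facts(1))
  interpret P: pair_prob_space ?Q ?Q ..
  have Ioi: "measure ?Q {y<..} = 1 - F y" for y
    using Q.prob_compl[of "{..y}"] Q_facts(3) by (simp add: Compl_eq_Diff_UNIV[symmetric] not_le)
  have Icc: "measure ?Q {0..y} = F y" if "0 \<le> y" for y
  proof -
    have "F y = measure ?Q ({..<0} \<union> {0..y})"
      using Q_facts(3)[of y] that by (simp add: ivl_disj_un)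
    also have "\<dots> = measure ?Q {0..y}"
      by (subst Q.finite_measure_Union) (auto simp: Q_facts(2))
    finally show ?thesis ..
  qed
  have Ici: "measure ?Q {0..} = 1"
    using Q.prob_compl[of "{..<0}"] Q_facts(2) by (simp add: Compl_eq_Diff_UNIV[symmetric] not_less)
  have Times: "measure ?P (A \<times> B) = measure ?Q A * measure ?Q B"
    if "A \<in> sets borel" "B \<in> sets borel" for A B
  proof -
    have "measure ?P (A \<times> B) = enn2real (emeasure ?Q A * emeasure ?Q B)"
      using Q.emeasure_pair_measure_Times[of A ?Q B] that by (simp add: measure_def)
    then show ?thesis
      unfolding Q.emeasure_eq_measure by (simp add: ennreal_mult'[symmetric])
  qed
  define R1 where "R1 = {x<..} \<times> {0..1::real}"
  define R2 where "R2 = {x - 1<..} \<times> {1<..x}"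
  define R3 where "R3 = {0::real..} \<times> {x<..}"
  have R_sets: "R1 \<in> sets ?P" "R2 \<in> sets ?P" "R3 \<in> sets ?P"
    unfolding R1_def R2_def R3_def by (auto intro!: pair_measureI)
  have "measure ?P (R1 \<union> R2 \<union> R3) = measure ?P (R1 \<union> R2) + measure ?P R3"
    by (rule P.finite_measure_Union) (use R_sets x in \<open>auto simp: R1_def R2_def R3_def\<close>)
  also have "\<dots> = measure ?P R1 + measure ?P R2 + measure ?P R3"
    by (subst P.finite_measure_Union) (use R_sets in \<open>auto simp: R1_def R2_def\<close>)
  also have "\<dots> = (1 - F x) * F 1 + (1 - F (x - 1)) * (F x - F 1) + (1 - F x)"
    unfolding R1_def R2_def R3_def using x
    by (subst (1 2 3) Times) (auto simp: Ioi Icc Ici Q_facts(4))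
  finally have "measure ?P (R1 \<union> R2 \<union> R3) = \<dots>" .
  moreover have "measure ?P (R1 \<union> R2 \<union> R3) \<le> measure ?P {z. fst z + snd z > x}"
  proof (rule P.finite_measure_mono)
    show "R1 \<union> R2 \<union> R3 \<subseteq> {z. fst z + snd z > x}"
      unfolding R1_def R2_def R3_def by auto
    have "{z. fst z + snd z > x} = {z \<in> space ?P. fst z + snd z > x}"
      by (simp add: space_pair_measure)
    also have "\<dots> \<in> sets ?P" by measurable
    finally show "{z. fst z + snd z > x} \<in> sets ?P" .
  qed
  ultimately show ?thesis by simp
qed

lemma subexponential_tail_pos:
  assumes "subexponential F"
  shows "0 < 1 - F x"
proof -
  let ?r = "\<lambda>x. measure (interval_measure F \<Otimes>\<^sub>M interval_measure F) {z. fst z + snd z > x} / (1 - F x)"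
  have F: "nonneg_cdf F" and r: "(?r \<longlongrightarrow> 2) at_top"
    using assms by (auto simp: subexponential_def)
  from r have "eventually (\<lambda>y. ?r y > 1) at_top"
    by (rule order_tendstoD) simp
  then obtain y0 where y0: "\<And>y. y0 \<le> y \<Longrightarrow> ?r y > 1"
    by (auto simp: eventually_at_top_linorder)
  define y where "y = max x y0"
  have "F y \<noteq> 1" using y0[of y] by (auto simp: y_def)
  moreover have "F y \<le> 1"
  proof -
    interpret real_distribution "interval_measure F"
      by (rule nonneg_cdf_interval_measure(1)[OF F])
    show ?thesis using nonneg_cdf_interval_measure(3)[OF F, of y] prob_le_1 by metis
  qed
  moreover have "F x \<le> F y"
    using F unfolding nonneg_cdf_def mono_def y_def by simp
  ultimately show ?thesis by simp
qed

lemma subexponential_long_tailed: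
  assumes "subexponential F"
  shows "((\<lambda>x. (1 - F (x - 1)) / (1 - F x)) \<longlongrightarrow> 1) at_top"
proof -
  let ?r = "\<lambda>x. measure (interval_measure F \<Otimes>\<^sub>M interval_measure F) {z. fst z + snd z > x} / (1 - F x)"
  have F: "nonneg_cdf F" and r: "(?r \<longlongrightarrow> 2) at_top" and F_top: "(F \<longlongrightarrow> 1) at_top"
    using assms by (auto simp: subexponential_def nonneg_cdf_def)
  have nd: "\<And>x y. x \<le> y \<Longrightarrow> F x \<le> F y"
    using F by (simp add: nonneg_cdf_def mono_def)
  have tail_pos: "\<And>x. 0 < 1 - F x"
    using subexponential_tail_pos[OF assms] .
  define g where "g x = (?r x - 1 - F 1) / (F x - F 1)" for x
  have "(g \<longlongrightarrow> (2 - 1 - F 1) / (1 - F 1)) at_top"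
    unfolding g_def by (intro tendsto_intros r F_top) (use tail_pos[of 1] in simp)
  then have g: "(g \<longlongrightarrow> 1) at_top"
    using tail_pos[of 1] by simp
  have "eventually (\<lambda>x. F 1 < F x) at_top"
    using F_top by (rule order_tendstoD) (use tail_pos[of 1] in simp)
  then have upper: "eventually (\<lambda>x. (1 - F (x - 1)) / (1 - F x) \<le> g x) at_top"
    using eventually_ge_at_top[of 1]
  proof eventually_elim
    case (elim x)
    have "(1 - F x) * F 1 + (1 - F (x - 1)) * (F x - F 1) + (1 - F x) \<le> ?r x * (1 - F x)"
      using convolution_tail_lower_bound[OF F elim(2)] tail_pos[of x] by simp
    then have "(1 - F (x - 1)) * (F x - F 1) \<le> (?r x - 1 - F 1) * (1 - F x)"
      by (simp add: algebra_simps)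
    then have "1 - F (x - 1) \<le> g x * (1 - F x)"
      using elim(1) by (simp add: g_def pos_le_divide_eq)
    then show ?case
      using tail_pos[of x] by (simp add: pos_divide_le_eq)
  qed
  have lower: "eventually (\<lambda>x. 1 \<le> (1 - F (x - 1)) / (1 - F x)) at_top"
    using tail_pos nd by (intro always_eventually allI) (simp add: le_divide_eq)
  show ?thesis
    by (rule tendsto_sandwich[OF lower upper tendsto_const g])
qed

lemma exponential_lower_bound_of_shift_bound:
  fixes G :: "real \<Rightarrow> real"
  assumes antimono: "\<And>x y. x \<le> y \<Longrightarrow> G y \<le> G x" and pos: "\<And>x. 0 < G x" and "0 \<le> c"
    and shift: "\<And>x. X \<le> x \<Longrightarrow> G (x - 1) \<le> exp c * G x"
  shows "\<exists>K>0. \<forall>x\<ge>X. K * exp (- c * x) \<le> G x"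
proof -
  have strip: "exp (- c * real n) * G X \<le> G x" if "X \<le> x" "x \<le> X + real n" for n x
    using that
  proof (induction n arbitrary: x)
    case 0
    then show ?case by simp
  next
    case (Suc n)
    have "exp (- c * real n) * G X \<le> G (x - 1)"
    proof (cases "X \<le> x - 1")
      case True
      then show ?thesis using Suc by simp
    next
      case False
      then have "exp (- c * real n) * G X \<le> G X"
        using \<open>0 \<le> c\<close> pos[of X] by (simp add: mult_le_cancel_right1)
      also have "\<dots> \<le> G (x - 1)" using False antimono by simp
      finally show ?thesis .
    qed
    then have "exp (- c) * (exp (- c * real n) * G X) \<le> exp (- c) * (exp c * G x)"
      using shift[OF Suc.prems(1)] by (simp add: order_trans)
    then show ?case by (simp add: algebra_simps exp_add[symmetric] exp_minus_inverse)
  qed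
  show ?thesis
  proof (intro exI conjI allI impI)
    show "0 < G X * exp (c * (X - 1))" using pos[of X] by simp
    fix x assume x: "X \<le> x"
    define n where "n = nat \<lceil>x - X\<rceil>"
    have n: "x \<le> X + real n" "real n \<le> x - X + 1" using x unfolding n_def by linarith+
    have "G X * exp (c * (X - 1)) * exp (- c * x) = exp (- c * (x - X + 1)) * G X"
      by (simp add: algebra_simps exp_add[symmetric])
    also have "\<dots> \<le> exp (- c * real n) * G X"
      using n \<open>0 \<le> c\<close> pos[of X] by (intro mult_right_mono) (auto simp: mult_left_mono)
    also have "\<dots> \<le> G x" using strip x n by blast
    finally show "G X * exp (c * (X - 1)) * exp (- c * x) \<le> G x" .
  qed
qed

lemma subexponential_heavy_tailed:
  assumes "subexponential F" and "0 < c"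
  shows "\<exists>K>0. eventually (\<lambda>x. K * exp (- c * x) \<le> 1 - F x) at_top"
proof -
  have tail_pos: "\<And>x. 0 < 1 - F x" using subexponential_tail_pos[OF assms(1)] .
  have "eventually (\<lambda>x. (1 - F (x - 1)) / (1 - F x) < exp c) at_top"
    using subexponential_long_tailed[OF assms(1)] by (rule order_tendstoD) (use assms(2) in simp)
  then obtain X where "\<And>x. X \<le> x \<Longrightarrow> 1 - F (x - 1) \<le> exp c * (1 - F x)"
    using tail_pos by (fastforce simp: eventually_at_top_linorder divide_less_eq)
  moreover have "\<And>x y. x \<le> y \<Longrightarrow> 1 - F y \<le> 1 - F x"
    using assms(1) by (simp add: subexponential_def nonneg_cdf_def mono_def)
  ultimately obtain K where "K > 0" "\<forall>x\<ge>X. K * exp (- c * x) \<le> 1 - F x"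
    using exponential_lower_bound_of_shift_bound[of "\<lambda>x. 1 - F x" c X] tail_pos assms(2) by auto
  then show ?thesis by (auto simp: eventually_at_top_linorder)
qed

lemma LDP_closed_exponential_bound:
  assumes "LDP M Z I" and "closed A" and "ereal c < (INF x\<in>A. I x)"
  shows "eventually (\<lambda>t. measure M {\<omega> \<in> space M. Z t \<omega> \<in> A} \<le> exp (- c * t)) at_top"
proof -
  let ?P = "\<lambda>t. measure M {\<omega> \<in> space M. Z t \<omega> \<in> A}"
  have "Limsup at_top (\<lambda>t. ereal (1 / t) * elog (?P t)) \<le> - (INF x\<in>A. I x)"
    using assms(1,2) by (simp add: LDP_def)
  also have "\<dots> < ereal (- c)"
    using assms(3) ereal_uminus_less_reorder[of "INF x\<in>A. I x" "ereal (- c)"] by simp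
  finally have "eventually (\<lambda>t. ereal (1 / t) * elog (?P t) < ereal (- c)) at_top"
    by (rule Limsup_lessD)
  then show ?thesis
    using eventually_gt_at_top[of 0]
  proof eventually_elim
    case (elim t)
    show ?case
    proof (cases "?P t \<le> 0")
      case True
      then show ?thesis by (smt (verit) exp_gt_zero)
    next
      case False
      then have "ln (?P t) < - c * t"
        using elim by (simp add: elog_def divide_less_eq)
      then show ?thesis
        using False by (smt (verit) exp_less_mono exp_ln)
    qed
  qed
qed

lemma LDP_upper_deviation_exponential:
  assumes ldp: "LDP M Z I" and zero: "\<And>x. I x = 0 \<longleftrightarrow> x = \<mu>"
    and mono: "\<And>x y. \<mu> \<le> x \<Longrightarrow> x \<le> y \<Longrightarrow> I x \<le> I y" and "\<mu> < \<nu>"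
  shows "\<exists>c>0. eventually (\<lambda>t. measure M {\<omega> \<in> space M. Z t \<omega> \<in> {\<nu>..}} \<le> exp (- c * t)) at_top"
proof -
  have "0 < I \<nu>"
    using ldp zero[of \<nu>] \<open>\<mu> < \<nu>\<close> by (auto simp: LDP_def rate_function_def order_le_less)
  then obtain c where c: "0 < ereal c" "ereal c < I \<nu>"
    using ereal_dense2 by blast
  have "ereal (c / 2) < ereal c" using c(1) by simp
  also have "ereal c \<le> (INF x\<in>{\<nu>..}. I x)"
    using c(2) mono \<open>\<mu> < \<nu>\<close> by (intro INF_greatest) (auto intro: order_trans[OF less_imp_le])
  finally have "eventually (\<lambda>t. measure M {\<omega> \<in> space M. Z t \<omega> \<in> {\<nu>..}} \<le> exp (- (c / 2) * t)) at_top"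
    by (intro LDP_closed_exponential_bound[OF ldp]) auto
  moreover have "0 < c / 2" using c(1) by simp
  ultimately show ?thesis by blast
qed

lemma le_card_partial_sums_iff:
  fixes f :: "nat \<Rightarrow> real"
  assumes nonneg: "\<And>i. 1 \<le> i \<Longrightarrow> 0 \<le> f i"
    and fin: "finite {i. 1 \<le> i \<and> (\<Sum>j=1..i. f j) \<le> t}" and "1 \<le> m"
  shows "m \<le> card {i. 1 \<le> i \<and> (\<Sum>j=1..i. f j) \<le> t} \<longleftrightarrow> (\<Sum>j=1..m. f j) \<le> t"
proof -
  have partial_mono: "(\<Sum>j=1..i. f j) \<le> (\<Sum>j=1..k. f j)" if "i \<le> k" for i k
    using that nonneg by (intro sum_mono2) auto
  show ?thesis
  proof
    assume "(\<Sum>j=1..m. f j) \<le> t"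
    then have "{1..m} \<subseteq> {i. 1 \<le> i \<and> (\<Sum>j=1..i. f j) \<le> t}"
      by (auto dest!: partial_mono[of _ m])
    from card_mono[OF fin this] show "m \<le> card {i. 1 \<le> i \<and> (\<Sum>j=1..i. f j) \<le> t}"
      by simp
  next
    assume m: "m \<le> card {i. 1 \<le> i \<and> (\<Sum>j=1..i. f j) \<le> t}"
    show "(\<Sum>j=1..m. f j) \<le> t"
    proof (rule ccontr)
      assume "\<not> (\<Sum>j=1..m. f j) \<le> t"
      then have "{i. 1 \<le> i \<and> (\<Sum>j=1..i. f j) \<le> t} \<subseteq> {1..<m}"
        by (auto simp: not_le[symmetric] dest!: partial_mono[of m])
      from card_mono[OF _ this] show False using m \<open>1 \<le> m\<close> by simp
    qed
  qed
qed

lemma counting_rate_ge_iff: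
  fixes f :: "nat \<Rightarrow> real"
  assumes nonneg: "\<And>i. 1 \<le> i \<Longrightarrow> 0 \<le> f i"
    and fin: "finite {i. 1 \<le> i \<and> (\<Sum>j=1..i. f j) \<le> t}" and "0 < t" "0 < \<nu>"
  shows "\<nu> \<le> real (card {i. 1 \<le> i \<and> (\<Sum>j=1..i. f j) \<le> t}) / t
    \<longleftrightarrow> (\<Sum>j=1..nat \<lceil>\<nu> * t\<rceil>. f j) \<le> t"
proof -
  have "0 < \<lceil>\<nu> * t\<rceil>" using \<open>0 < t\<close> \<open>0 < \<nu>\<close> by simp
  then have "1 \<le> nat \<lceil>\<nu> * t\<rceil>" by (simp add: le_nat_iff)
  have "\<nu> \<le> real (card {i. 1 \<le> i \<and> (\<Sum>j=1..i. f j) \<le> t}) / t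
      \<longleftrightarrow> nat \<lceil>\<nu> * t\<rceil> \<le> card {i. 1 \<le> i \<and> (\<Sum>j=1..i. f j) \<le> t}"
    using \<open>0 < t\<close> by (simp add: pos_le_divide_eq nat_le_iff ceiling_le_iff)
  also have "\<dots> \<longleftrightarrow> (\<Sum>j=1..nat \<lceil>\<nu> * t\<rceil>. f j) \<le> t"
    by (rule le_card_partial_sums_iff[OF nonneg fin \<open>1 \<le> nat \<lceil>\<nu> * t\<rceil>\<close>])
  finally show ?thesis .
qed

lemma renewal_rate_exceedance_exponential:
  fixes T :: "nat \<Rightarrow> 'a \<Rightarrow> real" and N :: "real \<Rightarrow> 'a \<Rightarrow> nat"
  assumes T_nonneg: "\<And>i \<omega>. 1 \<le> i \<Longrightarrow> \<omega> \<in> space M \<Longrightarrow> 0 \<le> T i \<omega>"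
    and N_fin: "\<And>t \<omega>. \<omega> \<in> space M \<Longrightarrow> finite {i. 1 \<le> i \<and> (\<Sum>j=1..i. T j \<omega>) \<le> t}"
    and N_def: "\<And>t \<omega>. \<omega> \<in> space M \<Longrightarrow> N t \<omega> = card {i. 1 \<le> i \<and> (\<Sum>j=1..i. T j \<omega>) \<le> t}"
    and ldp: "LDP M (\<lambda>t \<omega>. real (N t \<omega>) / t) I" and zero: "\<And>x. I x = 0 \<longleftrightarrow> x = \<mu>"
    and mono: "\<And>x y. \<mu> \<le> x \<Longrightarrow> x \<le> y \<Longrightarrow> I x \<le> I y" and "\<mu> < \<nu>" "0 < \<nu>"
  shows "\<exists>c>0. eventually (\<lambda>s. measure M {\<omega> \<in> space M. (\<Sum>j=1..nat \<lceil>\<nu> * s\<rceil>. T j \<omega>) \<le> s}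
           \<le> exp (- c * s)) at_top"
proof -
  obtain c where "0 < c" and rate: "eventually (\<lambda>t. measure M
      {\<omega> \<in> space M. real (N t \<omega>) / t \<in> {\<nu>..}} \<le> exp (- c * t)) at_top"
    using LDP_upper_deviation_exponential[OF ldp zero mono \<open>\<mu> < \<nu>\<close>] by blast
  have "eventually (\<lambda>s. measure M {\<omega> \<in> space M. (\<Sum>j=1..nat \<lceil>\<nu> * s\<rceil>. T j \<omega>) \<le> s}
      \<le> exp (- c * s)) at_top"
    using rate eventually_gt_at_top[of 0]
  proof eventually_elim
    case (elim s)
    have "{\<omega> \<in> space M. real (N s \<omega>) / s \<in> {\<nu>..}}
        = {\<omega> \<in> space M. (\<Sum>j=1..nat \<lceil>\<nu> * s\<rceil>. T j \<omega>) \<le> s}"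
      using counting_rate_ge_iff[OF T_nonneg N_fin elim(2) \<open>0 < \<nu>\<close>] by (auto simp: N_def)
    then show ?case using elim(1) by simp
  qed
  with \<open>0 < c\<close> show ?thesis by blast
qed

lemma drift_exceedance_partial_sum_bound:
  fixes S :: "nat \<Rightarrow> real"
  assumes mono: "\<And>m n. m \<le> n \<Longrightarrow> S m \<le> S n" and nonneg: "\<And>n. 0 \<le> S n"
    and a: "0 < a" and p: "0 < p" and \<nu>: "0 < \<nu>" and drift: "a * \<nu> \<le> p" and u: "4 * a * \<nu> \<le> u"
    and exceed: "u / 2 < real n * a - p * S n"
  shows "\<exists>k::nat. S (nat \<lceil>\<nu> * (k + 1 + u / (4 * a * \<nu>))\<rceil>) \<le> k + 1 + u / (4 * a * \<nu>)"
proof -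
  define t where "t = (real n * a - u / 2) / p"
  define k where "k = nat \<lfloor>t\<rfloor>"
  define s where "s = real k + 1 + u / (4 * a * \<nu>)"
  have St: "S n < t" using exceed p by (simp add: t_def pos_less_divide_eq algebra_simps)
  then have k: "real k \<le> t" "t < real k + 1" using nonneg[of n] unfolding k_def by linarith+
  have "a * (\<nu> * s) = a * \<nu> * (k + 1) + u / 4"
    using a \<nu> by (simp add: s_def field_simps)
  also have "\<dots> \<le> p * k + u / 2"
    using mult_right_mono[OF drift, of k] u by (simp add: algebra_simps)
  also have "p * k \<le> p * t" using k p by simp
  also have "p * t + u / 2 = a * real n" using p by (simp add: t_def)
  finally have "\<nu> * s \<le> real n" using a by (simp add: mult_le_cancel_left_pos)
  then have "S (nat \<lceil>\<nu> * s\<rceil>) \<le> S n"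
    by (intro mono) (simp add: nat_le_iff ceiling_le_iff)
  also have "\<dots> < real k + 1" using St k by simp
  also have "\<dots> \<le> s" using a \<nu> u by (simp add: s_def order.trans[OF _ u])
  finally have "S (nat \<lceil>\<nu> * s\<rceil>) \<le> s" by simp
  then show ?thesis unfolding s_def by blast
qed

lemma sup_drift_walk_exceedance:
  fixes T :: "nat \<Rightarrow> real"
  assumes nonneg: "\<And>i. 1 \<le> i \<Longrightarrow> 0 \<le> T i"
    and a: "0 < a" and p: "0 < p" and \<nu>: "0 < \<nu>" and drift: "a * \<nu> \<le> p" and u: "4 * a * \<nu> \<le> u"
    and sup: "ereal u \<le> (SUP n\<in>{1..}. ereal (real n * a - p * (\<Sum>i=1..n. T i)))"
  shows "\<exists>k::nat. (\<Sum>i=1..nat \<lceil>\<nu> * (k + 1 + u / (4 * a * \<nu>))\<rceil>. T i) \<le> k + 1 + u / (4 * a * \<nu>)"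
proof -
  have "0 < u" using u a \<nu> by (smt (verit) mult_pos_pos)
  then have "ereal (u / 2) < ereal u" by simp
  also note sup
  finally obtain n where exceed: "u / 2 < real n * a - p * (\<Sum>i=1..n. T i)"
    by (auto simp: less_SUP_iff)
  have partial_mono: "(\<Sum>i=1..m. T i) \<le> (\<Sum>i=1..n. T i)" if "m \<le> n" for m n
    using that nonneg by (intro sum_mono2) auto
  have partial_nonneg: "0 \<le> (\<Sum>i=1..m. T i)" for m
    using nonneg by (intro sum_nonneg) auto
  show ?thesis
    using drift_exceedance_partial_sum_bound[where S = "\<lambda>n. \<Sum>i=1..n. T i",
        OF partial_mono partial_nonneg a p \<nu> drift u exceed] .
qed

lemma sup_drift_walk_tail_exponential:
  fixes T :: "nat \<Rightarrow> 'a \<Rightarrow> real"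
  assumes "prob_space M" and T_meas[measurable]: "\<And>i. T i \<in> borel_measurable M"
    and T_nonneg: "\<And>i \<omega>. 1 \<le> i \<Longrightarrow> \<omega> \<in> space M \<Longrightarrow> 0 \<le> T i \<omega>"
    and a: "0 < a" and p: "0 < p" and \<nu>: "0 < \<nu>" and drift: "a * \<nu> \<le> p" and c: "0 < c"
    and small: "eventually (\<lambda>s. measure M {\<omega> \<in> space M. (\<Sum>j=1..nat \<lceil>\<nu> * s\<rceil>. T j \<omega>) \<le> s}
                   \<le> exp (- c * s)) at_top"
  shows "\<exists>\<beta>>0. \<exists>K. eventually (\<lambda>u. measure M {\<omega> \<in> space M.
           (SUP n\<in>{1..}. ereal (real n * a - p * (\<Sum>i=1..n. T i \<omega>))) \<ge> ereal u}
           \<le> K * exp (- \<beta> * u)) at_top"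
proof -
  interpret prob_space M by fact
  obtain S0 where S0: "\<And>s. S0 \<le> s \<Longrightarrow>
      measure M {\<omega> \<in> space M. (\<Sum>j=1..nat \<lceil>\<nu> * s\<rceil>. T j \<omega>) \<le> s} \<le> exp (- c * s)"
    using small by (auto simp: eventually_at_top_linorder)
  define \<beta> where "\<beta> = c / (4 * a * \<nu>)"
  define q where "q = exp (- c)"
  have q: "0 < q" "q < 1" using c by (auto simp: q_def)
  have bound: "measure M {\<omega> \<in> space M. (SUP n\<in>{1..}. ereal (real n * a - p * (\<Sum>i=1..n. T i \<omega>))) \<ge> ereal u}
          \<le> q / (1 - q) * exp (- \<beta> * u)"
    if u: "max (4 * a * \<nu>) (4 * a * \<nu> * S0) \<le> u" for u
  proof -
    define s where "s k = real k + 1 + u / (4 * a * \<nu>)" for k :: nat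
    define A where "A k = {\<omega> \<in> space M. (\<Sum>j=1..nat \<lceil>\<nu> * s k\<rceil>. T j \<omega>) \<le> s k}" for k
    have A_sets: "A k \<in> sets M" for k unfolding A_def by measurable
    have u_ge: "4 * a * \<nu> \<le> u" using u by simp
    have S0_le: "S0 \<le> u / (4 * a * \<nu>)" using u a \<nu> by (simp add: pos_le_divide_eq mult.commute)
    have A_le: "measure M (A k) \<le> exp (- \<beta> * u) * (q * q ^ k)" for k
    proof -
      have "measure M (A k) \<le> exp (- c * s k)"
        unfolding A_def by (rule S0) (use S0_le in \<open>simp add: s_def\<close>)
      also have "\<dots> = exp (- \<beta> * u) * (q * q ^ k)"
        using a \<nu> by (simp add: s_def \<beta>_def q_def field_simps flip: exp_add exp_of_nat_mult)
      finally show ?thesis .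
    qed
    have cover: "{\<omega> \<in> space M. (SUP n\<in>{1..}. ereal (real n * a - p * (\<Sum>i=1..n. T i \<omega>))) \<ge> ereal u}
        \<subseteq> (\<Union>k. A k)"
    proof safe
      fix \<omega> assume \<omega>: "\<omega> \<in> space M"
        and "ereal u \<le> (SUP n\<in>{1..}. ereal (real n * a - p * (\<Sum>i=1..n. T i \<omega>)))"
      then obtain k where "(\<Sum>i=1..nat \<lceil>\<nu> * s k\<rceil>. T i \<omega>) \<le> s k"
        using sup_drift_walk_exceedance[where T = "\<lambda>i. T i \<omega>", OF T_nonneg[OF _ \<omega>] a p \<nu> drift u_ge]
        by (auto simp: s_def)
      then show "\<omega> \<in> (\<Union>k. A k)" using \<omega> by (auto simp: A_def)
    qed
    have geometric: "summable (\<lambda>k. exp (- \<beta> * u) * (q * q ^ k))"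
      using q by (intro summable_mult summable_geometric) simp
    have A_summable: "summable (\<lambda>k. measure M (A k))"
      by (rule summable_comparison_test'[OF geometric, of 0]) (use A_le in simp)
    have "measure M {\<omega> \<in> space M. (SUP n\<in>{1..}. ereal (real n * a - p * (\<Sum>i=1..n. T i \<omega>))) \<ge> ereal u}
        \<le> measure M (\<Union>k. A k)"
      using cover A_sets by (intro finite_measure_mono) auto
    also have "\<dots> \<le> (\<Sum>k. measure M (A k))"
      using A_sets A_summable by (intro finite_measure_subadditive_countably) auto
    also have "\<dots> \<le> (\<Sum>k. exp (- \<beta> * u) * (q * q ^ k))"
      using A_le A_summable geometric by (intro suminf_le) auto
    also have "\<dots> = q / (1 - q) * exp (- \<beta> * u)"
      using q by (simp add: suminf_mult suminf_geometric summable_geometric)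
    finally show ?thesis .
  qed
  have "eventually (\<lambda>u. measure M {\<omega> \<in> space M.
      (SUP n\<in>{1..}. ereal (real n * a - p * (\<Sum>i=1..n. T i \<omega>))) \<ge> ereal u}
      \<le> q / (1 - q) * exp (- \<beta> * u)) at_top"
    by (rule eventually_mono[OF eventually_ge_at_top bound])
  moreover have "0 < \<beta>" using a \<nu> c by (simp add: \<beta>_def)
  ultimately show ?thesis by (intro exI[of _ \<beta>] conjI exI[of _ "q / (1 - q)"])
qed

lemma tendsto_zero_of_exponential_bounds:
  fixes f g :: "real \<Rightarrow> real"
  assumes f_nonneg: "eventually (\<lambda>u. 0 \<le> f u) at_top"
    and f_le: "eventually (\<lambda>u. f u \<le> C * exp (- \<beta> * u)) at_top"
    and K: "0 < K" and g_ge: "eventually (\<lambda>u. K * exp (- \<gamma> * u) \<le> g u) at_top"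
    and "\<gamma> < \<beta>"
  shows "((\<lambda>u. f u / g u) \<longlongrightarrow> 0) at_top"
proof (rule tendsto_sandwich)
  show "eventually (\<lambda>u. 0 \<le> f u / g u) at_top"
    using f_nonneg g_ge
    by eventually_elim (use K in \<open>smt (verit) divide_nonneg_pos exp_gt_zero mult_pos_pos\<close>)
  show "eventually (\<lambda>u. f u / g u \<le> C / K * exp (- (\<beta> - \<gamma>) * u)) at_top"
    using f_nonneg f_le g_ge
  proof eventually_elim
    case (elim u)
    have "f u / g u \<le> C * exp (- \<beta> * u) / (K * exp (- \<gamma> * u))"
      using elim K by (intro frac_le) auto
    also have "\<dots> = C / K * exp (- (\<beta> - \<gamma>) * u)"
      by (simp add: exp_diff exp_minus field_simps)
    finally show ?case .
  qed
  have "filterlim (\<lambda>u. - (\<beta> - \<gamma>) * u) at_bot at_top"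
    using \<open>\<gamma> < \<beta>\<close> by (intro filterlim_tendsto_neg_mult_at_bot[OF tendsto_const _ filterlim_ident]) simp
  then show "((\<lambda>u. C / K * exp (- (\<beta> - \<gamma>) * u)) \<longlongrightarrow> 0) at_top"
    by (intro tendsto_mult_right_zero filterlim_compose[OF exp_at_bot])
qed (rule tendsto_const)

theorem lemma2:
  fixes M :: "'a measure"
    and T C :: "nat \<Rightarrow> 'a \<Rightarrow> real"
    and N :: "real \<Rightarrow> 'a \<Rightarrow> nat"
    and p \<mu> :: real
    and I :: "real \<Rightarrow> ereal"
  assumes M: "prob_space M"
    and T_meas: "\<And>i. T i \<in> borel_measurable M"
    and C_meas: "\<And>i. C i \<in> borel_measurable M"
    and T_pos: "\<And>i \<omega>. 1 \<le> i \<Longrightarrow> \<omega> \<in> space M \<Longrightarrow> T i \<omega> > 0"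
    and N_fin: "\<And>t \<omega>. \<omega> \<in> space M \<Longrightarrow> finite {i. 1 \<le> i \<and> (\<Sum>j=1..i. T j \<omega>) \<le> t}"
    and N_def: "\<And>t \<omega>. \<omega> \<in> space M \<Longrightarrow> N t \<omega> = card {i. 1 \<le> i \<and> (\<Sum>j=1..i. T j \<omega>) \<le> t}"
    and C_indep: "prob_space.indep_vars M (\<lambda>_. borel) C {1..}"
    and C_ident: "\<And>i. 1 \<le> i \<Longrightarrow> distr M borel (C i) = distr M borel (C 1)"
    and C_nonneg: "\<And>i \<omega>. 1 \<le> i \<Longrightarrow> \<omega> \<in> space M \<Longrightarrow> 0 \<le> C i \<omega>"
    and C_int: "integrable M (C 1)"
    and CT_indep: "prob_space.indep_var M
        (Pi\<^sub>M {1..} (\<lambda>_. borel)) (\<lambda>\<omega>. \<lambda>i\<in>{1..}. C i \<omega>)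
        (Pi\<^sub>M {1..} (\<lambda>_. borel)) (\<lambda>\<omega>. \<lambda>i\<in>{1..}. T i \<omega>)"
    and p_pos: "p > 0"
    and mu_pos: "\<mu> > 0"
    and A1_i: "LDP M (\<lambda>t \<omega>. real (N t \<omega>) / t) I"
    and A1_i_zero: "\<And>x. I x = 0 \<longleftrightarrow> x = \<mu>"
    and A1_ii_inc: "\<And>x y. \<mu> \<le> x \<Longrightarrow> x \<le> y \<Longrightarrow> I x \<le> I y"
    and A1_ii_dec: "\<And>x y. 0 \<le> x \<Longrightarrow> x \<le> y \<Longrightarrow> y \<le> \<mu> \<Longrightarrow> I y \<le> I x"
    and A1_iii: "\<mu> * integral\<^sup>L M (C 1) / p < 1"
    and A1_iv: "\<exists>\<theta>>0. \<forall>n. integrable M (\<lambda>\<omega>. exp (\<theta> * (\<Sum>i=1..n. T i \<omega>)))"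
    and B0_sub: "subexponential (integrated_tail M (C 1))"
  shows "\<exists>\<epsilon>0>0. \<forall>\<epsilon>. 0 < \<epsilon> \<and> \<epsilon> < \<epsilon>0 \<longrightarrow>
           ((\<lambda>u. measure M {\<omega> \<in> space M.
                 (SUP n\<in>{1..}. ereal (real n * (p / \<mu> - \<epsilon>) - p * (\<Sum>i=1..n. T i \<omega>))) \<ge> ereal u}
               / (1 - integrated_tail M (C 1) u)) \<longlongrightarrow> 0) at_top"
proof -
  interpret prob_space M by (rule M)
  have T_nonneg: "\<And>i \<omega>. 1 \<le> i \<Longrightarrow> \<omega> \<in> space M \<Longrightarrow> 0 \<le> T i \<omega>"
    using T_pos by (simp add: less_imp_le)
  show ?thesis
  proof (intro exI[of _ "p / \<mu>"] conjI allI impI)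
    show "0 < p / \<mu>" using p_pos mu_pos by simp
    fix \<epsilon> assume \<epsilon>: "0 < \<epsilon> \<and> \<epsilon> < p / \<mu>"
    define a where "a = p / \<mu> - \<epsilon>"
    define \<nu> where "\<nu> = (\<mu> + p / a) / 2"
    have a: "0 < a" and "\<mu> < p / a" "\<mu> * a < p"
      using \<epsilon> mu_pos p_pos by (auto simp: a_def field_simps)
    have \<nu>: "\<mu> < \<nu>" "0 < \<nu>"
      using \<open>\<mu> < p / a\<close> mu_pos by (auto simp: \<nu>_def)
    have drift: "a * \<nu> \<le> p"
      using \<open>\<mu> * a < p\<close> a by (simp add: \<nu>_def field_simps)
    obtain c where c: "0 < c" and renewal: "eventually (\<lambda>s. measure M
        {\<omega> \<in> space M. (\<Sum>j=1..nat \<lceil>\<nu> * s\<rceil>. T j \<omega>) \<le> s} \<le> exp (- c * s)) at_top"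
      using renewal_rate_exceedance_exponential[where T = T and N = N,
          OF T_nonneg N_fin N_def A1_i A1_i_zero A1_ii_inc \<nu>] by blast
    obtain \<beta> K where \<beta>: "0 < \<beta>" and walk_tail: "eventually (\<lambda>u. measure M {\<omega> \<in> space M.
        (SUP n\<in>{1..}. ereal (real n * a - p * (\<Sum>i=1..n. T i \<omega>))) \<ge> ereal u}
        \<le> K * exp (- \<beta> * u)) at_top"
      using sup_drift_walk_tail_exponential[where T = T, OF M T_meas T_nonneg a p_pos \<nu>(2) drift c renewal]
      by blast
    obtain K' where "0 < K'"
      and heavy: "eventually (\<lambda>u. K' * exp (- (\<beta> / 2) * u) \<le> 1 - integrated_tail M (C 1) u) at_top"
      using subexponential_heavy_tailed[OF B0_sub, of "\<beta> / 2"] \<beta> by auto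
    show "((\<lambda>u. measure M {\<omega> \<in> space M.
        (SUP n\<in>{1..}. ereal (real n * (p / \<mu> - \<epsilon>) - p * (\<Sum>i=1..n. T i \<omega>))) \<ge> ereal u}
        / (1 - integrated_tail M (C 1) u)) \<longlongrightarrow> 0) at_top"
      using \<beta> unfolding a_def
      by (intro tendsto_zero_of_exponential_bounds[OF _ walk_tail[unfolded a_def] \<open>0 < K'\<close> heavy]
          always_eventually) auto
  qed
qed

end
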